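(* Let $i,j\in\{1,\dots,N\}$ and let $m\ge 0$ be an integer. If $m<\delta_{ji}$ (with $\delta_{ji}=\infty$ if there is no directed path from $j$ to $i$), then $\big((-L)^m\big)_{ij}=0$. If $m=\delta_{ji}<\infty$, then $\big((-L)^m\big)_{ij}$ equals the sum of the weights of all shortest directed paths from $j$ to $i$, and this number equals $\vartheta(\mathcal F_m^{j\to i})$.
   Context: Let $\mathcal G$ be a weighted directed graph on the vertex set $\{1,\dots,N\}$ with adjacency matrix $A=[a_{ij}]$, where $a_{ij}>0$ if there is an arc from vertex $j$ to vertex $i$ and $a_{ij}=0$ otherwise; there are no self-loops, so $a_{ii}=0$. The weight of the arc from $j$ to $i$ is $a_{ij}$. The Laplacian is $L=D-A$, where $D=\mathrm{diag}\big(\sum_{j}a_{1j},\dots,\sum_j a_{Nj}\big)$. A directed path from $u$ to $w$ is a sequence of pairwise distinct vertices $u=v_0,v_1,\dots,v_\ell=w$ such that there is an arc from $v_k$ to $v_{k+1}$ for each $k$. Its length is $\ell$, and its weight is the product of the weights of its arcs (the empty product is $1$). The distance $\delta_{uw}$ is the length of a shortest directed path from $u$ to $w$. A diverging (out-)tree is a set of arcs on a vertex subset that has a root vertex of in-degree $0$, has every other vertex of in-degree exactly $1$, and has a directed path from the root to every vertex of the subset. A spanning diverging forest is a set of arcs of $\mathcal G$ such that the vertex set $\{1,\dots,N\}$ is partitioned into vertex-disjoint diverging trees formed by these arcs; isolated vertices are trivial trees. The weight of a forest is the product of the weights of its arcs. For vertices $u,w$ and an integer $k\ge0$, $\mathcal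 F_k^{u\to w}$ denotes the set of all spanning diverging forests with exactly $k$ arcs in which $u$ is the root of a tree that contains $w$. The quantity $\vartheta(\mathcal F_k^{u\to w})$ is the sum of the weights of the forests in $\mathcal F_k^{u\to w}$. *)

theory Defs
  imports Main "HOL-Library.Extended_Nat"
begin

(* Vertices are 1..N. Weight function a :: nat => nat => real, a i j = weight of arc j -> i.
   Arcs are represented as pairs (source, target), i.e. (j, i) is the arc from j to i. *)

definition arc :: "nat \<Rightarrow> (nat \<Rightarrow> nat \<Rightarrow> real) \<Rightarrow> nat \<Rightarrow> nat \<Rightarrow> bool" where
  "arc N a j i \<longleftrightarrow> j \<in> {1..N} \<and> i \<in> {1..N} \<and> a i j > 0"

definition mat_mult :: "nat \<Rightarrow> (nat \<Rightarrow> nat \<Rightarrow> real) \<Rightarrow> (nat \<Rightarrow> nat \<Rightarrow> real) \<Rightarrow> nat \<Rightarrow> nat \<Rightarrow> real" where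
  "mat_mult N A B i j = (\<Sum>k\<in>{1..N}. A i k * B k j)"

fun mat_pow :: "nat \<Rightarrow> (nat \<Rightarrow> nat \<Rightarrow> real) \<Rightarrow> nat \<Rightarrow> nat \<Rightarrow> nat \<Rightarrow> real" where
  "mat_pow N A 0 = (\<lambda>i j. if i = j then 1 else 0)"
| "mat_pow N A (Suc m) = mat_mult N (mat_pow N A m) A"

definition laplacian :: "nat \<Rightarrow> (nat \<Rightarrow> nat \<Rightarrow> real) \<Rightarrow> nat \<Rightarrow> nat \<Rightarrow> real" where
  "laplacian N a i j = (if i = j then (\<Sum>k\<in>{1..N}. a i k) else 0) - a i j"

definition dpath :: "nat \<Rightarrow> (nat \<Rightarrow> nat \<Rightarrow> real) \<Rightarrow> nat \<Rightarrow> nat \<Rightarrow> nat list \<Rightarrow> bool" where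
  "dpath N a u w p \<longleftrightarrow> p \<noteq> [] \<and> hd p = u \<and> last p = w \<and> distinct p \<and> set p \<subseteq> {1..N}
     \<and> (\<forall>k < length p - 1. arc N a (p ! k) (p ! Suc k))"

definition path_len :: "nat list \<Rightarrow> nat" where
  "path_len p = length p - 1"

definition path_weight :: "(nat \<Rightarrow> nat \<Rightarrow> real) \<Rightarrow> nat list \<Rightarrow> real" where
  "path_weight a p = (\<Prod>k<length p - 1. a (p ! Suc k) (p ! k))"

definition dist_g :: "nat \<Rightarrow> (nat \<Rightarrow> nat \<Rightarrow> real) \<Rightarrow> nat \<Rightarrow> nat \<Rightarrow> enat" where
  "dist_g N a u w = (INF p \<in> {p. dpath N a u w p}. enat (path_len p))"

definition shortest_paths :: "nat \<Rightarrow> (nat \<Rightarrow> nat \<Rightarrow> real) \<Rightarrow> nat \<Rightarrow> nat \<Rightarrow> nat list set" where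
  "shortest_paths N a u w = {p. dpath N a u w p \<and> enat (path_len p) = dist_g N a u w}"

definition diverging_tree :: "(nat \<times> nat) set \<Rightarrow> nat set \<Rightarrow> nat \<Rightarrow> bool" where
  "diverging_tree T B r \<longleftrightarrow> r \<in> B \<and> T \<subseteq> B \<times> B
     \<and> (\<forall>x. (x, r) \<notin> T)
     \<and> (\<forall>v \<in> B - {r}. \<exists>!x. (x, v) \<in> T)
     \<and> (\<forall>v \<in> B. (r, v) \<in> T\<^sup>*)"

(* F is a spanning diverging forest of G, decomposed by the partition P of {1..N}
   into the vertex sets of its trees, rt B being the root of the tree on block B *)
definition forest_decomp :: "nat \<Rightarrow> (nat \<Rightarrow> nat \<Rightarrow> real) \<Rightarrow> (nat \<times> nat) set \<Rightarrow> nat set set \<Rightarrow> (nat set \<Rightarrow> nat) \<Rightarrow> bool" where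
  "forest_decomp N a F P rt \<longleftrightarrow>
     (\<forall>(j, i) \<in> F. arc N a j i)
     \<and> \<Union>P = {1..N} \<and> {} \<notin> P
     \<and> (\<forall>B \<in> P. \<forall>B' \<in> P. B \<noteq> B' \<longrightarrow> B \<inter> B' = {})
     \<and> (\<forall>e \<in> F. \<exists>B \<in> P. e \<in> B \<times> B)
     \<and> (\<forall>B \<in> P. diverging_tree (F \<inter> (B \<times> B)) B (rt B))"

definition spanning_forest :: "nat \<Rightarrow> (nat \<Rightarrow> nat \<Rightarrow> real) \<Rightarrow> (nat \<times> nat) set \<Rightarrow> bool" where
  "spanning_forest N a F \<longleftrightarrow> (\<exists>P rt. forest_decomp N a F P rt)"

definition forests_k :: "nat \<Rightarrow> (nat \<Rightarrow> nat \<Rightarrow> real) \<Rightarrow> nat \<Rightarrow> nat \<Rightarrow> nat \<Rightarrow> (nat \<times> nat) set set" where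
  "forests_k N a k u w = {F. card F = k \<and>
      (\<exists>P rt. forest_decomp N a F P rt \<and> (\<exists>B \<in> P. w \<in> B \<and> rt B = u))}"

definition forest_weight :: "(nat \<Rightarrow> nat \<Rightarrow> real) \<Rightarrow> (nat \<times> nat) set \<Rightarrow> real" where
  "forest_weight a F = (\<Prod>(j, i) \<in> F. a i j)"

definition theta :: "(nat \<Rightarrow> nat \<Rightarrow> real) \<Rightarrow> (nat \<times> nat) set set \<Rightarrow> real" where
  "theta a S = (\<Sum>F \<in> S. forest_weight a F)"

end

(*
  Off the diagonal, -L is the weighted adjacency matrix, so expanding ((-L)^(m+1))_ij along the
  last factor only involves the entry at j itself and the entries at out-neighbours k of j.
  Since delta_ji <= delta_ki + 1 for every arc j -> k, induction on m shows that the entry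
  vanishes for m < delta_ji, and that for m = delta_ji only the neighbours with delta_ki = m
  survive: a_kj times the shortest k -> i paths are exactly the shortest j -> i paths.
  A forest with delta_ji arcs in which j roots a tree containing i contains the tree path from
  j to i, which already has at least delta_ji arcs; so the forest is a shortest path, and
  conversely every shortest path, with all other vertices isolated, is such a forest.
*)
theory Submission
  imports Defs
begin

fun path_arcs :: "nat list \<Rightarrow> (nat \<times> nat) set" where
  "path_arcs (x # y # r) = insert (x, y) (path_arcs (y # r))"
| "path_arcs _ = {}"

lemma path_arcs_subset: "path_arcs p \<subseteq> set p \<times> set p"
  by (induction p rule: path_arcs.induct) auto

lemma path_arcs_memD: "(x, y) \<in> path_arcs p \<Longrightarrow> x \<in> set p \<and> y \<in> set p"
  using path_arcs_subset by blast

lemma finite_path_arcs: "finite (path_arcs p)"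
  by (induction p rule: path_arcs.induct) auto

lemma card_path_arcs: "distinct p \<Longrightarrow> card (path_arcs p) = length p - 1"
proof (induction p rule: path_arcs.induct)
  case (1 x y r)
  then have "(x, y) \<notin> path_arcs (y # r)" by (auto dest: path_arcs_memD)
  with 1 show ?case by (simp add: finite_path_arcs)
qed auto

lemma path_weight_Cons_Cons: "path_weight a (x # y # r) = a y x * path_weight a (y # r)"
  unfolding path_weight_def by (simp only: length_Cons diff_Suc_1 prod.lessThan_Suc_shift) simp

lemma forest_weight_path_arcs: "distinct p \<Longrightarrow> forest_weight a (path_arcs p) = path_weight a p"
proof (induction p rule: path_arcs.induct)
  case (1 x y r)
  then have "(x, y) \<notin> path_arcs (y # r)" by (auto dest: path_arcs_memD)
  with 1 show ?case by (simp add: forest_weight_def path_weight_Cons_Cons finite_path_arcs)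
qed (auto simp: forest_weight_def path_weight_def)

lemma path_arcs_hd:
  assumes "(x, y) \<in> path_arcs q" "hd q = x" "distinct q"
  obtains r where "q = x # y # r"
proof (cases q rule: path_arcs.cases)
  case (1 x' z r)
  with assms have "x' = x" "(x, y) \<notin> path_arcs (z # r)" by (auto dest: path_arcs_memD)
  with assms 1 that show ?thesis by auto
qed (use assms in auto)

lemma path_arcs_inject:
  "\<lbrakk>distinct p; distinct q; p \<noteq> []; q \<noteq> []; hd p = hd q; path_arcs p = path_arcs q\<rbrakk> \<Longrightarrow> p = q"
proof (induction p arbitrary: q rule: path_arcs.induct)
  case (1 x y r)
  then have "(x, y) \<in> path_arcs q" "hd q = x" by (metis insertI1 path_arcs.simps(1), simp)
  with "1.prems"(2) obtain r' where q: "q = x # y # r'" by (elim path_arcs_hd)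
  have "(x, y) \<notin> path_arcs (y # r)" "(x, y) \<notin> path_arcs (y # r')"
    using 1(2,3) q by (auto dest: path_arcs_memD)
  with 1(7) q have "path_arcs (y # r) = path_arcs (y # r')" by (simp add: insert_ident)
  with 1(1)[of "y # r'"] 1(2,3) q show ?case by simp
next
  case ("2_2" v)
  then show ?case by (cases q rule: path_arcs.cases) auto
qed simp

lemma diverging_tree_path_arcs: "\<lbrakk>distinct p; p \<noteq> []\<rbrakk> \<Longrightarrow> diverging_tree (path_arcs p) (set p) (hd p)"
proof (induction p rule: path_arcs.induct)
  case (1 x y r)
  let ?T = "path_arcs (y # r)" and ?B = "set (y # r)"
  have IH: "diverging_tree ?T ?B y" and x: "x \<notin> ?B" using 1 by simp_all
  have "(x, v) \<in> (insert (x, y) ?T)\<^sup>*" if "v \<in> ?B" for v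
  proof -
    have "(y, v) \<in> ?T\<^sup>*" using IH that unfolding diverging_tree_def by blast
    then have "(y, v) \<in> (insert (x, y) ?T)\<^sup>*" by (rule rtrancl_mono[THEN subsetD, rotated]) auto
    then show ?thesis by (rule converse_rtrancl_into_rtrancl[rotated]) simp
  qed
  moreover have "\<exists>!z. (z, v) \<in> insert (x, y) ?T" if "v \<in> ?B" for v
  proof (cases "v = y")
    case True
    with IH show ?thesis unfolding diverging_tree_def by auto
  next
    case False
    with IH that have "\<exists>!z. (z, v) \<in> ?T" unfolding diverging_tree_def by blast
    with False show ?thesis by auto
  qed
  moreover have "(z, x) \<notin> insert (x, y) ?T" for z using x by (auto dest: path_arcs_memD)
  moreover have "insert (x, y) ?T \<subseteq> insert x ?B \<times> insert x ?B"
    using path_arcs_subset[of "y # r"] by auto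
  ultimately have "diverging_tree (insert (x, y) ?T) (insert x ?B) x"
    unfolding diverging_tree_def by (intro conjI ballI allI) auto
  then show ?case by simp
qed (auto simp: diverging_tree_def)

lemma finite_arc_targets: "finite {v. arc N a u v}"
  by (rule finite_subset[of _ "{1..N}"]) (auto simp: arc_def)

lemma dpath_singleton_iff: "dpath N a u w [x] \<longleftrightarrow> x = u \<and> x = w \<and> x \<in> {1..N}"
  unfolding dpath_def by auto

lemma dpath_Cons_Cons_iff: "dpath N a u w (x # y # r) \<longleftrightarrow>
   x = u \<and> arc N a x y \<and> x \<notin> set (y # r) \<and> dpath N a y w (y # r)"
  unfolding dpath_def arc_def by (auto simp: All_less_Suc2)

lemma dpathD:
  assumes "dpath N a u w p"
  shows "p \<noteq> []" "distinct p" "hd p = u" "last p = w" "set p \<subseteq> {1..N}"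
  using assms unfolding dpath_def by auto

lemma dpath_Cons:
  assumes "arc N a u v" "u \<notin> set p" "dpath N a v w p"
  shows "dpath N a u w (u # p)"
proof -
  from dpathD[OF assms(3)] obtain r where "p = v # r" by (cases p) auto
  with assms show ?thesis by (simp add: dpath_Cons_Cons_iff)
qed

lemma path_arcs_arc: "\<lbrakk>dpath N a u w p; (x, y) \<in> path_arcs p\<rbrakk> \<Longrightarrow> arc N a x y"
  by (induction p arbitrary: u rule: path_arcs.induct) (auto simp: dpath_Cons_Cons_iff)

lemma dpath_suffix:
  "\<lbrakk>dpath N a u w p; v \<in> set p\<rbrakk> \<Longrightarrow>
     \<exists>q. dpath N a v w q \<and> length q \<le> length p \<and> path_arcs q \<subseteq> path_arcs p"
proof (induction p arbitrary: u rule: path_arcs.induct)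
  case (1 x y r)
  show ?case
  proof (cases "v = x")
    case True
    with "1.prems" show ?thesis by (intro exI[of _ "x # y # r"]) (auto simp: dpath_Cons_Cons_iff)
  next
    case False
    with "1.prems" obtain q where "dpath N a v w q" "length q \<le> length (y # r)"
      "path_arcs q \<subseteq> path_arcs (y # r)"
      using "1.IH"[of y] by (auto simp: dpath_Cons_Cons_iff)
    then show ?thesis by (intro exI[of _ q]) auto
  qed
next
  case ("2_2" x)
  then show ?case by (intro exI[of _ "[x]"]) (auto simp: dpath_singleton_iff)
qed (simp add: dpath_def)

lemma dpath_of_rtrancl:
  assumes "(u, w) \<in> T\<^sup>*" "\<forall>(x, y) \<in> T. arc N a x y" "w \<in> {1..N}"
  obtains p where "dpath N a u w p" "path_arcs p \<subseteq> T"
proof -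
  from assms(1) have "\<exists>p. dpath N a u w p \<and> path_arcs p \<subseteq> T"
  proof (induction rule: converse_rtrancl_induct)
    case base
    with assms(3) show ?case by (auto simp: dpath_singleton_iff intro!: exI[of _ "[w]"])
  next
    case (step x z)
    then obtain q where q: "dpath N a z w q" "path_arcs q \<subseteq> T" by blast
    show ?case
    proof (cases "x \<in> set q")
      case True
      with q dpath_suffix[OF q(1)] show ?thesis by blast
    next
      case False
      from q(1) obtain r where "q = z # r" by (cases q) (auto dest: dpathD)
      with q step.hyps(1) assms(2) False show ?thesis by (intro exI[of _ "x # q"]) (auto intro: dpath_Cons)
    qed
  qed
  with that show ?thesis by blast
qed

lemma dist_g_le: "dpath N a u w p \<Longrightarrow> dist_g N a u w \<le> enat (path_len p)"
  unfolding dist_g_def by (rule INF_lower) simp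

lemma dist_g_attained:
  assumes "dist_g N a u w = enat n"
  obtains p where "dpath N a u w p" "path_len p = n"
proof -
  have "{p. dpath N a u w p} \<noteq> {}"
  proof
    assume "{p. dpath N a u w p} = {}"
    then have "dist_g N a u w = \<infinity>" unfolding dist_g_def by (simp add: top_enat_def[symmetric])
    with assms show False by simp
  qed
  then have "dist_g N a u w \<in> (\<lambda>p. enat (path_len p)) ` {p. dpath N a u w p}"
    unfolding dist_g_def Inf_enat_def by (auto intro: LeastI)
  with assms that show ?thesis by auto
qed

lemma dist_g_self: "u \<in> {1..N} \<Longrightarrow> dist_g N a u u = 0"
  using dist_g_le[of N a u u "[u]"] by (simp add: dpath_singleton_iff path_len_def enat_0)

lemma dist_g_eq_0_iff: "u \<in> {1..N} \<Longrightarrow> dist_g N a u w = 0 \<longleftrightarrow> w = u"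
proof
  assume "dist_g N a u w = 0"
  then obtain p where p: "dpath N a u w p" "path_len p = 0"
    using dist_g_attained[of N a u w 0] by (auto simp: zero_enat_def)
  then obtain x where "p = [x]" unfolding path_len_def by (cases p) (auto dest: dpathD)
  with p show "w = u" by (simp add: dpath_singleton_iff)
qed (simp add: dist_g_self)

lemma dist_g_arc_le: "arc N a u v \<Longrightarrow> dist_g N a u w \<le> eSuc (dist_g N a v w)"
proof (cases "dist_g N a v w")
  case (enat n)
  assume uv: "arc N a u v"
  obtain q where q: "dpath N a v w q" "path_len q = n" using dist_g_attained[OF enat] .
  obtain p where p: "dpath N a u w p" "path_len p \<le> Suc n"
  proof (cases "u \<in> set q")
    case True
    then obtain p where "dpath N a u w p" "length p \<le> length q" using dpath_suffix[OF q(1)] by blast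
    with q(2) that show ?thesis by (auto simp: path_len_def)
  next
    case False
    with q uv show ?thesis by (intro that[of "u # q"] dpath_Cons) (auto simp: path_len_def)
  qed
  have "dist_g N a u w \<le> enat (path_len p)" using p(1) by (rule dist_g_le)
  also have "\<dots> \<le> eSuc (enat n)" using p(2) by (simp add: eSuc_enat)
  finally show ?thesis using enat by simp
qed simp

lemma finite_shortest_paths: "finite (shortest_paths N a u w)"
proof -
  have "shortest_paths N a u w \<subseteq> {p. set p \<subseteq> {1..N} \<and> length p \<le> N}"
  proof
    fix p assume "p \<in> shortest_paths N a u w"
    then have "dpath N a u w p" by (simp add: shortest_paths_def)
    note dpathD(2,5)[OF this]
    then show "p \<in> {p. set p \<subseteq> {1..N} \<and> length p \<le> N}"
      using distinct_card card_mono[of "{1..N}" "set p"] by fastforce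
  qed
  then show ?thesis by (rule finite_subset) (rule finite_lists_length_le, simp)
qed

lemma shortest_paths_self:
  assumes u: "u \<in> {1..N}"
  shows "shortest_paths N a u u = {[u]}"
proof -
  have "p = [u]" if p: "dpath N a u u p" for p
  proof (cases p rule: path_arcs.cases)
    case (1 x y r)
    have "last (y # r) \<in> set (y # r)" by (rule last_in_set) simp
    with dpathD(2-4)[OF p] 1 show ?thesis by simp
  qed (use dpathD(1,3)[OF p] in auto)
  moreover have "dpath N a u u [u]" using u by (simp add: dpath_singleton_iff)
  ultimately have "dpath N a u u p \<longleftrightarrow> p = [u]" for p by blast
  with dist_g_self[OF u] show ?thesis by (auto simp: shortest_paths_def path_len_def enat_0)
qed

lemma shortest_paths_Suc:
  assumes "dist_g N a u w = enat (Suc m)"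
  shows "shortest_paths N a u w =
    (\<Union>v \<in> {v. arc N a u v \<and> dist_g N a v w = enat m}. Cons u ` shortest_paths N a v w)"
proof (intro equalityI subsetI)
  fix q assume "q \<in> shortest_paths N a u w"
  with assms have q: "dpath N a u w q" "path_len q = Suc m" by (auto simp: shortest_paths_def)
  then obtain v r where qv: "q = u # v # r"
    unfolding path_len_def by (cases q rule: path_arcs.cases) (auto dest: dpathD)
  with q have uv: "arc N a u v" and p: "dpath N a v w (v # r)" "path_len (v # r) = m"
    by (auto simp: dpath_Cons_Cons_iff path_len_def)
  have "enat m \<le> dist_g N a v w"
    using dist_g_arc_le[OF uv, of w] assms by (simp flip: eSuc_enat)
  with dist_g_le[OF p(1)] p(2) have "dist_g N a v w = enat m" by simp
  with uv p qv show "q \<in> (\<Union>v \<in> {v. arc N a u v \<and> dist_g N a v w = enat m}.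
      Cons u ` shortest_paths N a v w)"
    by (auto simp: shortest_paths_def)
next
  fix q assume "q \<in> (\<Union>v \<in> {v. arc N a u v \<and> dist_g N a v w = enat m}. Cons u ` shortest_paths N a v w)"
  then obtain v p where uv: "arc N a u v" "dist_g N a v w = enat m" and q: "q = u # p"
    and p: "dpath N a v w p" "path_len p = m"
    by (auto simp: shortest_paths_def)
  have "u \<notin> set p"
  proof
    assume "u \<in> set p"
    then obtain p' where p': "dpath N a u w p'" "length p' \<le> length p" using dpath_suffix[OF p(1)] by blast
    have "dist_g N a u w \<le> enat (path_len p')" using p'(1) by (rule dist_g_le)
    also have "\<dots> \<le> enat m" using p'(2) p(2) by (simp add: path_len_def)
    finally show False using assms by simp
  qed
  with uv p have "dpath N a u w q" unfolding q by (rule_tac dpath_Cons)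
  moreover have "path_len q = Suc m" using p dpathD(1)[OF p(1)] by (cases p) (simp_all add: q path_len_def)
  ultimately show "q \<in> shortest_paths N a u w" using assms by (simp add: shortest_paths_def)
qed

lemma sum_shortest_paths_Suc:
  assumes "dist_g N a u w = enat (Suc m)"
  shows "(\<Sum>p \<in> shortest_paths N a u w. path_weight a p) =
    (\<Sum>v \<in> {v. arc N a u v \<and> dist_g N a v w = enat m}.
      a v u * (\<Sum>p \<in> shortest_paths N a v w. path_weight a p))"
proof -
  let ?V = "{v. arc N a u v \<and> dist_g N a v w = enat m}"
  have "finite ?V" by (rule finite_subset[OF _ finite_arc_targets]) blast
  moreover have "Cons u ` shortest_paths N a v w \<inter> Cons u ` shortest_paths N a v' w = {}"
    if "v \<noteq> v'" for v v' using that by (auto simp: shortest_paths_def dest: dpathD(3))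
  ultimately have "(\<Sum>p \<in> shortest_paths N a u w. path_weight a p) =
      (\<Sum>v \<in> ?V. \<Sum>p \<in> Cons u ` shortest_paths N a v w. path_weight a p)"
    unfolding shortest_paths_Suc[OF assms] by (intro sum.UNION_disjoint) (auto simp: finite_shortest_paths)
  also have "\<dots> = (\<Sum>v \<in> ?V. \<Sum>p \<in> shortest_paths N a v w. a v u * path_weight a p)"
  proof (rule sum.cong[OF refl])
    fix v
    have "path_weight a (u # p) = a v u * path_weight a p" if "p \<in> shortest_paths N a v w" for p
      using that by (cases p) (auto simp: shortest_paths_def path_weight_Cons_Cons dest: dpathD)
    then show "(\<Sum>p \<in> Cons u ` shortest_paths N a v w. path_weight a p) =
        (\<Sum>p \<in> shortest_paths N a v w. a v u * path_weight a p)"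
      by (simp add: sum.reindex)
  qed
  finally show ?thesis by (simp add: sum_distrib_left)
qed

abbreviation neg_laplacian :: "nat \<Rightarrow> (nat \<Rightarrow> nat \<Rightarrow> real) \<Rightarrow> nat \<Rightarrow> nat \<Rightarrow> real" where
  "neg_laplacian N a \<equiv> \<lambda>p q. - laplacian N a p q"

lemma mat_pow_Suc_entry: "mat_pow N A (Suc m) i j = (\<Sum>k \<in> {1..N}. mat_pow N A m i k * A k j)"
  by (simp add: mat_mult_def)

context
  fixes N :: nat and a :: "nat \<Rightarrow> nat \<Rightarrow> real"
  assumes nonneg: "\<And>p q. p \<in> {1..N} \<Longrightarrow> q \<in> {1..N} \<Longrightarrow> a p q \<ge> 0"
    and noloop: "\<And>p. p \<in> {1..N} \<Longrightarrow> a p p = 0"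
begin

lemma mat_pow_neg_laplacian_Suc:
  assumes j: "j \<in> {1..N}"
  shows "mat_pow N (neg_laplacian N a) (Suc m) i j =
    mat_pow N (neg_laplacian N a) m i j * neg_laplacian N a j j
    + (\<Sum>k \<in> {k. arc N a j k}. mat_pow N (neg_laplacian N a) m i k * a k j)"
proof -
  let ?M = "mat_pow N (neg_laplacian N a) m"
  have arcs: "{k. arc N a j k} \<subseteq> {1..N} - {j}"
    using noloop[OF j] by (auto simp: arc_def)
  have "mat_pow N (neg_laplacian N a) (Suc m) i j =
      ?M i j * neg_laplacian N a j j + (\<Sum>k \<in> {1..N} - {j}. ?M i k * neg_laplacian N a k j)"
    by (simp only: mat_pow_Suc_entry sum.remove[OF finite_atLeastAtMost j])
  also have "(\<Sum>k \<in> {1..N} - {j}. ?M i k * neg_laplacian N a k j) =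
      (\<Sum>k \<in> {k. arc N a j k}. ?M i k * a k j)"
  proof (rule sum.mono_neutral_cong_right)
    show "\<forall>k \<in> {1..N} - {j} - {k. arc N a j k}. ?M i k * neg_laplacian N a k j = 0"
      using nonneg j by (force simp: arc_def laplacian_def)
  qed (use arcs in \<open>auto simp: laplacian_def\<close>)
  finally show ?thesis .
qed

lemma mat_pow_neg_laplacian_below_dist:
  assumes "j \<in> {1..N}" "enat m < dist_g N a j i"
  shows "mat_pow N (neg_laplacian N a) m i j = 0"
  using assms
proof (induction m arbitrary: j)
  case 0
  then show ?case using dist_g_self[of j N a] by (auto simp: enat_0)
next
  case (Suc m)
  have "enat m < enat (Suc m)" by simp
  with Suc have "mat_pow N (neg_laplacian N a) m i j = 0" by (meson order.strict_trans)
  moreover have "mat_pow N (neg_laplacian N a) m i k = 0" if jk: "arc N a j k" for k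
  proof -
    have "enat (Suc m) < eSuc (dist_g N a k i)" using Suc.prems(2) dist_g_arc_le[OF jk] by (rule less_le_trans)
    then have "enat m < dist_g N a k i" by (simp flip: eSuc_enat)
    with jk Suc.IH show ?thesis by (simp add: arc_def)
  qed
  ultimately show ?case
    by (simp add: mat_pow_neg_laplacian_Suc[OF Suc.prems(1)] sum.neutral del: mat_pow.simps)
qed

lemma mat_pow_neg_laplacian_dist:
  assumes "j \<in> {1..N}" "dist_g N a j i = enat m"
  shows "mat_pow N (neg_laplacian N a) m i j = (\<Sum>p \<in> shortest_paths N a j i. path_weight a p)"
  using assms
proof (induction m arbitrary: j)
  case 0
  then have "i = j" using dist_g_eq_0_iff by (simp add: enat_0)
  with 0 show ?case by (simp add: shortest_paths_self path_weight_def)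
next
  case (Suc m)
  let ?M = "mat_pow N (neg_laplacian N a) m"
  let ?V = "{k. arc N a j k \<and> dist_g N a k i = enat m}"
  have "?M i j = 0"
    using Suc.prems by (intro mat_pow_neg_laplacian_below_dist) auto
  moreover have "(\<Sum>k \<in> {k. arc N a j k}. ?M i k * a k j) =
      (\<Sum>k \<in> ?V. a k j * (\<Sum>p \<in> shortest_paths N a k i. path_weight a p))"
  proof (rule sum.mono_neutral_cong_right)
    show "\<forall>k \<in> {k. arc N a j k} - ?V. ?M i k * a k j = 0"
    proof
      fix k assume k: "k \<in> {k. arc N a j k} - ?V"
      then have "enat m \<le> dist_g N a k i"
        using dist_g_arc_le[of N a j k i] Suc.prems(2) by (auto simp flip: eSuc_enat)
      with k have "enat m < dist_g N a k i" by auto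
      with k show "?M i k * a k j = 0"
        by (auto simp: arc_def intro: mat_pow_neg_laplacian_below_dist)
    qed
  qed (use Suc.IH in \<open>auto simp: arc_def finite_arc_targets\<close>)
  ultimately show ?case
    by (simp add: mat_pow_neg_laplacian_Suc[OF Suc.prems(1)] sum_shortest_paths_Suc[OF Suc.prems(2)]
      del: mat_pow.simps)
qed

end

lemma forest_decomp_path_arcs:
  assumes p: "dpath N a u w p"
  obtains P rt where "forest_decomp N a (path_arcs p) P rt" "set p \<in> P" "rt (set p) = u"
proof
  let ?P = "insert (set p) ((\<lambda>v. {v}) ` ({1..N} - set p))"
  let ?rt = "\<lambda>B. if B = set p then u else the_elem B"
  note p' = dpathD[OF p]
  have "diverging_tree (path_arcs p \<inter> B \<times> B) B (?rt B)" if "B \<in> ?P" for B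
  proof -
    from that consider "B = set p" | v where "v \<notin> set p" "B = {v}" by auto
    then show ?thesis
    proof cases
      case 1
      then have "path_arcs p \<inter> B \<times> B = path_arcs p" using path_arcs_subset by blast
      with 1 show ?thesis using diverging_tree_path_arcs[OF p'(2,1)] p'(3) by simp
    next
      case 2
      then have "B \<noteq> set p" "path_arcs p \<inter> B \<times> B = {}" by (auto dest: path_arcs_memD)
      with 2 show ?thesis by (simp add: diverging_tree_def)
    qed
  qed
  with p' show "forest_decomp N a (path_arcs p) ?P ?rt"
    unfolding forest_decomp_def using path_arcs_arc[OF p] path_arcs_subset[of p] by auto
qed auto

lemma forests_k_dist:
  assumes d: "dist_g N a u w = enat m"
  shows "forests_k N a m u w = path_arcs ` shortest_paths N a u w"
proof (intro equalityI subsetI)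
  fix F assume "F \<in> forests_k N a m u w"
  then obtain P rt B where F: "card F = m" "forest_decomp N a F P rt" and B: "B \<in> P" "w \<in> B" "rt B = u"
    unfolding forests_k_def by blast
  have arcs: "\<forall>(x, y) \<in> F. arc N a x y" and cover: "\<Union>P = {1..N}"
    and tree: "diverging_tree (F \<inter> B \<times> B) B u"
    using F(2) B unfolding forest_decomp_def by auto
  from tree B(2) have "(u, w) \<in> (F \<inter> B \<times> B)\<^sup>*" unfolding diverging_tree_def by blast
  then have "(u, w) \<in> F\<^sup>*" by (rule rtrancl_mono[THEN subsetD, rotated]) blast
  moreover have "w \<in> {1..N}" using cover B by blast
  ultimately obtain p where p: "dpath N a u w p" "path_arcs p \<subseteq> F"
    using arcs by (elim dpath_of_rtrancl)
  have "finite F"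
    by (rule finite_subset[of _ "{1..N} \<times> {1..N}"]) (use arcs in \<open>auto simp: arc_def\<close>)
  have card_p: "card (path_arcs p) = path_len p"
    using dpathD(2)[OF p(1)] by (simp add: card_path_arcs path_len_def)
  have "enat m \<le> enat (path_len p)" using dist_g_le[OF p(1)] d by simp
  moreover have "card (path_arcs p) \<le> m" using card_mono[OF \<open>finite F\<close> p(2)] F(1) by simp
  ultimately have "path_len p = m" using card_p by simp
  then have "path_arcs p = F" using card_subset_eq[OF \<open>finite F\<close> p(2)] card_p F(1) by simp
  moreover have "p \<in> shortest_paths N a u w" using p(1) \<open>path_len p = m\<close> d by (simp add: shortest_paths_def)
  ultimately show "F \<in> path_arcs ` shortest_paths N a u w" by blast
next
  fix F assume "F \<in> path_arcs ` shortest_paths N a u w"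
  then obtain p where F: "F = path_arcs p" and p: "dpath N a u w p" "path_len p = m"
    using d unfolding shortest_paths_def by auto
  obtain P rt where "forest_decomp N a F P rt" "set p \<in> P" "rt (set p) = u"
    using forest_decomp_path_arcs[OF p(1)] unfolding F .
  moreover have "card F = m" using F p dpathD(2)[OF p(1)] by (simp add: card_path_arcs path_len_def)
  ultimately show "F \<in> forests_k N a m u w"
    using dpathD(4)[OF p(1)] last_in_set[OF dpathD(1)[OF p(1)]] unfolding forests_k_def by blast
qed

lemma theta_forests_k_dist:
  assumes "dist_g N a u w = enat m"
  shows "theta a (forests_k N a m u w) = (\<Sum>p \<in> shortest_paths N a u w. path_weight a p)"
proof -
  have "inj_on path_arcs (shortest_paths N a u w)"
    by (rule inj_onI) (auto simp: shortest_paths_def intro: path_arcs_inject dest: dpathD)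
  then have "theta a (forests_k N a m u w) = (\<Sum>p \<in> shortest_paths N a u w. forest_weight a (path_arcs p))"
    unfolding theta_def forests_k_dist[OF assms] by (simp add: sum.reindex)
  also have "\<dots> = (\<Sum>p \<in> shortest_paths N a u w. path_weight a p)"
    by (rule sum.cong) (auto simp: shortest_paths_def forest_weight_path_arcs dest: dpathD)
  finally show ?thesis .
qed

theorem lemma1:
  fixes N :: nat and a :: "nat \<Rightarrow> nat \<Rightarrow> real" and i j m :: nat
  assumes nonneg: "\<And>p q. p \<in> {1..N} \<Longrightarrow> q \<in> {1..N} \<Longrightarrow> a p q \<ge> 0"
    and noloop: "\<And>p. p \<in> {1..N} \<Longrightarrow> a p p = 0"
    and i: "i \<in> {1..N}" and j: "j \<in> {1..N}"
  shows "(enat m < dist_g N a j i \<longrightarrow>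
            mat_pow N (\<lambda>p q. - laplacian N a p q) m i j = 0)
       \<and> (enat m = dist_g N a j i \<longrightarrow>
            mat_pow N (\<lambda>p q. - laplacian N a p q) m i j
              = (\<Sum>p \<in> shortest_paths N a j i. path_weight a p)
          \<and> mat_pow N (\<lambda>p q. - laplacian N a p q) m i j
              = theta a (forests_k N a m j i))"
  using mat_pow_neg_laplacian_below_dist[of N a, OF nonneg noloop j]
    mat_pow_neg_laplacian_dist[of N a, OF nonneg noloop j] theta_forests_k_dist[of N a j i m]
  by auto

end
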